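(* For every $k, \ell \in \mathbb{N}$, $$p_\ell^*(k) \leqslant \left( \frac{e^2 k}{\ell^2} \right)^{\ell}.$$
   Context: $p_\ell^*(k)$ denotes the number of partitions of $k$ into $\ell$ distinct parts, i.e. the number of sets $S \subset \mathbb{N} = \{1,2,\ldots\}$ with $|S| = \ell$ and $\sum_{a \in S} a = k$. *)

theory Defs
  imports Complex_Main
begin

definition distinct_partitions :: "nat \<Rightarrow> nat \<Rightarrow> nat" where
  "distinct_partitions l k = card {S :: nat set. S \<subseteq> {1..} \<and> finite S \<and> card S = l \<and> \<Sum>S = k}"

end

theory Submission
  imports Defs "HOL-Combinatorics.Multiset_Permutations"
begin

text \<open>Ordering the l parts of a distinct partition of k in each of the l! possible ways and
taking partial sums gives an l-subset of {1..k}; since the parts are positive, the ordered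
parts are recovered from the partial sums, so  l! p(k) \<le> C(k,l) \<le> k^l / l!.
Together with l! \<ge> (l/e)^l this gives  p(k) \<le> k^l / l!^2 \<le> (e^2 k / l^2)^l.\<close>

fun partial_sums :: "nat list \<Rightarrow> nat set" where
  "partial_sums [] = {}"
| "partial_sums (x # xs) = insert x ((+) x ` partial_sums xs)"

lemma finite_partial_sums: "finite (partial_sums xs)"
  by (induction xs) auto

lemma partial_sums_pos: "\<forall>z\<in>set xs. z > 0 \<Longrightarrow> y \<in> partial_sums xs \<Longrightarrow> y > 0"
  by (induction xs arbitrary: y) auto

lemma partial_sums_le_sum_list: "y \<in> partial_sums xs \<Longrightarrow> y \<le> sum_list xs"
  by (induction xs arbitrary: y) auto

lemma hd_notin_shifted_partial_sums:
  "\<forall>z\<in>set xs. z > 0 \<Longrightarrow> x \<notin> (+) x ` partial_sums xs"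
  using partial_sums_pos by fastforce

lemma partial_sums_Cons_Diff_hd:
  "\<forall>z\<in>set xs. z > 0 \<Longrightarrow> partial_sums (x # xs) - {x} = (+) x ` partial_sums xs"
  using hd_notin_shifted_partial_sums[of xs x] by simp

lemma hd_le_partial_sums: "y \<in> partial_sums (x # xs) \<Longrightarrow> x \<le> y"
  by auto

lemma card_partial_sums: "\<forall>z\<in>set xs. z > 0 \<Longrightarrow> card (partial_sums xs) = length xs"
proof (induction xs)
  case (Cons x xs)
  then show ?case
    using hd_notin_shifted_partial_sums[of xs x]
    by (simp add: finite_partial_sums card_image)
qed simp

text \<open>A list of positive numbers is determined by its partial sums: the head is the least
one, and removing it leaves the partial sums of the tail, shifted by the head.\<close>

lemma inj_on_partial_sums: "inj_on partial_sums {xs. \<forall>z\<in>set xs. z > 0}"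
proof (rule inj_onI, clarsimp)
  fix xs ys :: "nat list"
  assume "\<forall>z\<in>set xs. z > 0" "\<forall>z\<in>set ys. z > 0" "partial_sums xs = partial_sums ys"
  then show "xs = ys"
  proof (induction xs arbitrary: ys)
    case Nil
    then show ?case
      by (cases ys) auto
  next
    case (Cons x xs)
    then obtain y ys' where ys: "ys = y # ys'"
      by (cases ys) auto
    have eq: "partial_sums (x # xs) = partial_sums (y # ys')"
      using Cons.prems(3) ys by simp
    have "x \<in> partial_sums (x # xs)" "y \<in> partial_sums (y # ys')"
      by simp_all
    then have "y \<le> x" "x \<le> y"
      using eq hd_le_partial_sums by metis+
    then have xy: "x = y"
      by simp
    have "(+) x ` partial_sums xs = partial_sums (x # xs) - {x}"
      by (rule partial_sums_Cons_Diff_hd[symmetric]) (use Cons.prems(1) in simp)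
    also have "\<dots> = partial_sums (y # ys') - {y}"
      by (subst eq) (simp only: xy)
    also have "\<dots> = (+) y ` partial_sums ys'"
      by (rule partial_sums_Cons_Diff_hd) (use Cons.prems(2) ys in simp)
    finally have "partial_sums xs = partial_sums ys'"
      using xy by (simp add: inj_image_eq_iff)
    then have "xs = ys'"
      using Cons.IH[of ys'] Cons.prems(1,2) ys by simp
    then show ?case
      using ys xy by simp
  qed
qed

lemma card_distinct_lists_with_set_in:
  assumes "finite F" and "\<And>S. S \<in> F \<Longrightarrow> finite S \<and> card S = n"
  shows "card {xs. distinct xs \<and> set xs \<in> F} = card F * fact n"
proof -
  have "{xs. distinct xs \<and> set xs \<in> F} = (\<Union>S\<in>F. permutations_of_set S)"
    by (auto simp: permutations_of_set_def)
  also have "card \<dots> = (\<Sum>S\<in>F. card (permutations_of_set S))"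
    using assms(1) by (rule card_UN_disjoint) (simp, auto simp: permutations_of_set_def)
  also have "\<dots> = card F * fact n"
    using assms(2) by simp
  finally show ?thesis .
qed

lemma distinct_partitions_mult_fact_le: "distinct_partitions l k * fact l \<le> k choose l"
proof -
  define F where "F = {S :: nat set. S \<subseteq> {1..} \<and> finite S \<and> card S = l \<and> \<Sum>S = k}"
  define L where "L = {xs. distinct xs \<and> set xs \<in> F}"
  have "F \<subseteq> Pow {1..k}"
    using member_le_sum[of _ _ id] by (fastforce simp: F_def)
  then have "finite F"
    by (rule finite_subset) simp
  then have "card L = card F * fact l"
    unfolding L_def by (rule card_distinct_lists_with_set_in) (simp add: F_def)
  moreover have "partial_sums ` L \<subseteq> {B. B \<subseteq> {1..k} \<and> card B = l}"
  proof clarify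
    fix xs assume "xs \<in> L"
    then have pos: "\<forall>z\<in>set xs. z > 0" and "length xs = l" and "sum_list xs = k"
      by (auto simp: L_def F_def distinct_card distinct_sum_list_conv_Sum)
    then show "partial_sums xs \<subseteq> {1..k} \<and> card (partial_sums xs) = l"
      using partial_sums_pos[OF pos] partial_sums_le_sum_list card_partial_sums[OF pos]
      by (fastforce simp: Suc_le_eq)
  qed
  moreover have "inj_on partial_sums L"
    by (rule inj_on_subset[OF inj_on_partial_sums]) (auto simp: L_def F_def)
  moreover have "finite {B. B \<subseteq> {1..k} \<and> card B = l}"
    by simp
  ultimately have "card F * fact l \<le> card {B. B \<subseteq> {1..k} \<and> card B = l}"
    using card_inj_on_le by metis
  also have "\<dots> = k choose l"
    using n_subsets[of "{1..k}" l] by simp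
  finally show ?thesis
    unfolding distinct_partitions_def F_def .
qed

lemma pow_div_fact_le_exp:
  fixes x :: real
  assumes "x \<ge> 0"
  shows "x ^ n / fact n \<le> exp x"
proof -
  have "(\<lambda>m. x ^ m / fact m) sums exp x"
    using exp_converges[of x] by (simp add: field_simps)
  then show ?thesis
    using sum_le_suminf[of "\<lambda>m. x ^ m / fact m" "{n}"] assms by (simp add: sums_iff)
qed

lemma pow_div_exp_le_fact: "(real n / exp 1) ^ n \<le> fact n"
  using pow_div_fact_le_exp[of "real n" n]
  by (simp add: field_simps flip: exp_of_nat_mult)

theorem lemma5p1:
  fixes k l :: nat
  assumes "k \<ge> 1" and "l \<ge> 1"
  shows "real (distinct_partitions l k) \<le> (exp 2 * real k / (real l)^2) ^ l"
proof -
  let ?p = "real (distinct_partitions l k)"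
  have "?p * fact l * fact l \<le> real (k choose l) * fact l"
    using distinct_partitions_mult_fact_le[of l k]
    by (metis of_nat_fact of_nat_le_iff of_nat_mult mult_right_mono of_nat_0_le_iff)
  also have "\<dots> \<le> real k ^ l"
    using binomial_fact_pow[of k l] by (metis of_nat_fact of_nat_le_iff of_nat_mult of_nat_power)
  finally have "?p * (fact l * fact l) \<le> real k ^ l"
    by (simp only: mult.assoc)
  moreover have "?p * ((real l / exp 1) ^ l * (real l / exp 1) ^ l) \<le> ?p * (fact l * fact l)"
    by (intro mult_left_mono mult_mono pow_div_exp_le_fact) auto
  ultimately have "?p * ((real l / exp 1) ^ l * (real l / exp 1) ^ l) \<le> real k ^ l"
    by linarith
  moreover have "(real l / exp 1) ^ l * (real l / exp 1) ^ l = ((real l)^2 / exp 2) ^ l"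
    by (simp add: power2_eq_square flip: power_mult_distrib exp_add)
  moreover have "((real l)^2 / exp 2) ^ l > 0"
    using assms(2) by simp
  ultimately have "?p \<le> real k ^ l / ((real l)^2 / exp 2) ^ l"
    by (simp add: pos_le_divide_eq)
  also have "\<dots> = (exp 2 * real k / (real l)^2) ^ l"
    by (metis power_divide divide_divide_eq_right mult.commute)
  finally show ?thesis .
qed

end
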